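(* Let $C\in\mathbb{R}$ with $|C|\neq 1$, and let $S = C\partial_x + \partial_t$. Let $a\in C^2(\mathbb{R},[0,\infty))$ with $a(t)=0$ for $t\le 0$ and $a(t)=1$ for $t>t_0$ (some $t_0>0$), and let $b\in C^2(\mathbb{R},\mathbb{R})$ with $b(x)=0$ for $x\notin(-L,L)$ (some $L>0$). Put $h(x,t)=a(t)b(x)$. Then the solution $f$ of the linear shallow-water problem $$(S^2-\partial_x^2)f = S^2 h \quad (x\in\mathbb{R},\ t>0),\qquad f(x,0)=0,\quad f_t(x,0)=0,$$ is given by $$f(x,t) = \frac12\int_0^t\int_{x-(t-s)(C+1)}^{x-(t-s)(C-1)} (S^2h)(r,s)\,dr\,ds$$ and this equals $$f(x,t) = a(t)b(x) + \frac12\int_0^t a(s)\Big[b'\big(x-(t-s)(C-1)\big) - b'\big(x-(t-s)(C+1)\big)\Big]\,ds .$$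
   Context: This is the shallow-water ($\delta\to0$), irrotational-current limit of a linearized water-wave model: $f(x,t)$ is the non-dimensional free-surface displacement, $h(x,t)$ the non-dimensional displacement of the sea bed (seabed motion $a(t)$ in time, localized profile $b(x)$), and $C$ the non-dimensional constant horizontal velocity of the background current. *)

theory Defs
  imports "HOL-Analysis.Analysis"
begin

text \<open>Functions of two variables are written h x t (space x first, time t second).\<close>

text \<open>The operator S^2 = (C d/dx + d/dt)^2 applied to a (sufficiently smooth) h, written via
  iterated one-variable derivatives:
  S^2 h = h_tt + C (h_x)_t + C (h_t)_x + C^2 h_xx.\<close>
definition S2 :: "real \<Rightarrow> (real \<Rightarrow> real \<Rightarrow> real) \<Rightarrow> real \<Rightarrow> real \<Rightarrow> real" where
  "S2 C h x t =
     deriv (\<lambda>s. deriv (\<lambda>s'. h x s') s) t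
   + C * deriv (\<lambda>s. deriv (\<lambda>y. h y s) x) t
   + C * deriv (\<lambda>y. deriv (\<lambda>s. h y s) t) x
   + C^2 * deriv (\<lambda>y. deriv (\<lambda>y'. h y' t) y) x"

definition is_solution :: "real \<Rightarrow> (real \<Rightarrow> real \<Rightarrow> real) \<Rightarrow> (real \<Rightarrow> real \<Rightarrow> real) \<Rightarrow> bool" where
  "is_solution C g f \<longleftrightarrow>
    (\<exists>fx ft fxx fxt ftx ftt :: real \<Rightarrow> real \<Rightarrow> real.
      (\<forall>x t. t > 0 \<longrightarrow>
          ((\<lambda>y. f y t) has_real_derivative fx x t) (at x)
        \<and> ((\<lambda>s. f x s) has_real_derivative ft x t) (at t)
        \<and> ((\<lambda>y. fx y t) has_real_derivative fxx x t) (at x)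
        \<and> ((\<lambda>s. fx x s) has_real_derivative fxt x t) (at t)
        \<and> ((\<lambda>y. ft y t) has_real_derivative ftx x t) (at x)
        \<and> ((\<lambda>s. ft x s) has_real_derivative ftt x t) (at t))
    \<and> continuous_on (UNIV \<times> {0<..}) (\<lambda>(x,t). fx x t)
    \<and> continuous_on (UNIV \<times> {0<..}) (\<lambda>(x,t). fxx x t)
    \<and> continuous_on (UNIV \<times> {0<..}) (\<lambda>(x,t). fxt x t)
    \<and> continuous_on (UNIV \<times> {0<..}) (\<lambda>(x,t). ftx x t)
    \<and> continuous_on (UNIV \<times> {0<..}) (\<lambda>(x,t). ftt x t)
    \<and> (\<forall>x. ((\<lambda>s. f x s) has_real_derivative ft x 0) (at_right 0))
    \<and> continuous_on (UNIV \<times> {0..}) (\<lambda>(x,t). f x t)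
    \<and> continuous_on (UNIV \<times> {0..}) (\<lambda>(x,t). ft x t)
    \<and> (\<forall>x t. t > 0 \<longrightarrow>
          ftt x t + C * fxt x t + C * ftx x t + C^2 * fxx x t - fxx x t = g x t)
    \<and> (\<forall>x. f x 0 = 0)
    \<and> (\<forall>x. ft x 0 = 0))"

end

(* The operator S^2 - d_x^2 factors as (d_t + (C-1) d_x)(d_t + (C+1) d_x), whose characteristics
   are the lines x - (C-1) t = const and x - (C+1) t = const.

   Uniqueness: if w is the difference of two solutions, then w_t + (C+1) w_x is transported along
   the first family, hence equals c(x - (C-1) t); integrating along the second family gives
   w = (P(x - (C-1) t) - P(x - (C+1) t)) / 2 with P' = c, and w_t(x,0) = 0 forces c = 0.

   Existence: for the source a(t) b(x) the function
     a t b x + 1/2 (int_0^t a(s) b'(x - (t-s)(C-1)) ds - int_0^t a(s) b'(x - (t-s)(C+1)) ds)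
   is a classical solution; its derivatives are computed under the integral sign, moving the
   time dependence into the integrand since a vanishes for t <= 0, and integrating by parts
   where b'' would have to be differentiated. The double integral F equals this function because
   the inner integral is explicit and, apart from the term (C^2 - 1) a b', the resulting
   integrand is an exact derivative in s.

   Only the C^2 regularity of a and b, a = 0 on (-inf, 0] and |C| <> 1 are used; the support
   of b, the sign of a and its value after t0 play no role. *)

theory Submission
  imports Defs
begin

section \<open>Convolution along characteristics\<close>

lemma has_integral_of_has_real_derivative:
  fixes f f' :: "real \<Rightarrow> real"
  assumes "u \<le> v" and "\<And>y. (f has_real_derivative f' y) (at y)"
  shows "(f' has_integral f v - f u) {u..v}"
  using assms
  by (intro fundamental_theorem_of_calculus)
    (auto simp: has_real_derivative_iff_has_vector_derivative[symmetric] intro: has_field_derivative_at_within)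

lemma continuous_on_UNIV_has_antiderivative:
  fixes f :: "real \<Rightarrow> real"
  assumes "continuous_on UNIV f"
  obtains F where "\<And>x. (F has_real_derivative f x) (at x)"
proof -
  have "\<exists>F. \<forall>x::real. (-\<infinity>::ereal) < x \<longrightarrow> x < \<infinity> \<longrightarrow> (F has_vector_derivative f x) (at x)"
    by (rule einterval_antiderivative) (use assms in \<open>auto simp: continuous_on_eq_continuous_at\<close>)
  then show ?thesis
    using that by (auto simp: has_real_derivative_iff_has_vector_derivative)
qed

lemma DERIV_eq_0_if_vanishing_nonpos:
  fixes f :: "real \<Rightarrow> real"
  assumes "(f has_real_derivative D) (at t)" and "t \<le> 0" and "\<And>s. s \<le> 0 \<Longrightarrow> f s = 0"
  shows "D = 0"
proof -
  have "((\<lambda>y. (f y - f t) / (y - t)) \<longlongrightarrow> D) (at_left t)"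
    using has_field_derivative_at_within[OF assms(1), of "{..<t}"] by (simp add: has_field_derivative_iff)
  moreover have "\<forall>\<^sub>F y in at_left t. (f y - f t) / (y - t) = 0"
    using assms(2,3) by (auto simp: eventually_at_filter)
  then have "((\<lambda>y. (f y - f t) / (y - t)) \<longlongrightarrow> 0) (at_left t)"
    by (rule tendsto_eventually)
  ultimately show ?thesis
    using tendsto_unique[OF trivial_limit_at_left_real] by blast
qed

lemma integral_reflect_Icc_real:
  "integral {0..t} (\<lambda>\<sigma>. f (t - \<sigma>)) = integral {0..t} (f :: real \<Rightarrow> real)"
proof -
  have "integral {0..t} (\<lambda>\<sigma>. f (t - \<sigma>)) = integral {-t..0} (\<lambda>u. f (t + u))"
    using Henstock_Kurzweil_Integration.integral_reflect_real[of 0 "-t" "\<lambda>u. f (t + u)"] by simp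
  also have "\<dots> = integral {0..t} f"
    using integral_shift_Icc_real[of "-t" 0 f t] by (simp add: o_def add.commute)
  finally show ?thesis .
qed

definition char_conv :: "(real \<Rightarrow> real) \<Rightarrow> (real \<Rightarrow> real) \<Rightarrow> real \<Rightarrow> real \<Rightarrow> real \<Rightarrow> real" where
  "char_conv \<phi> \<psi> k x t = integral {0..t} (\<lambda>s. \<phi> s * \<psi> (x - (t - s) * k))"

lemma char_conv_diff:
  assumes "continuous_on UNIV \<phi>" and "continuous_on UNIV \<psi>"
  shows "char_conv \<phi> \<psi> k x t - char_conv \<phi> \<psi> m x t
    = integral {0..t} (\<lambda>s. \<phi> s * (\<psi> (x - (t - s) * k) - \<psi> (x - (t - s) * m)))"
proof -
  have int: "(\<lambda>s. \<phi> s * \<psi> (x - (t - s) * l)) integrable_on {0..t}" for l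
    by (intro integrable_continuous_interval continuous_intros continuous_on_compose2[OF assms(1)]
        continuous_on_compose2[OF assms(2)]) auto
  show ?thesis
    unfolding char_conv_def right_diff_distrib integral_diff[OF int int] ..
qed

text \<open>Since \<open>\<phi>\<close> vanishes on \<open>(-\<infinity>, 0]\<close>, the time variable can be moved out of the domain
  of integration, which makes the dependence on \<open>t\<close> amenable to the Leibniz rule.\<close>
lemma char_conv_eq_integral_fixed:
  assumes c\<phi>: "continuous_on UNIV \<phi>" and c\<psi>: "continuous_on UNIV \<psi>"
    and \<phi>0: "\<And>s. s \<le> 0 \<Longrightarrow> \<phi> s = 0" and "t \<le> M" and "0 \<le> M"
  shows "char_conv \<phi> \<psi> k x t = integral {0..M} (\<lambda>\<sigma>. \<phi> (t - \<sigma>) * \<psi> (x - \<sigma> * k))"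
proof (cases "t \<le> 0")
  case True
  then have "integral {0..M} (\<lambda>\<sigma>. \<phi> (t - \<sigma>) * \<psi> (x - \<sigma> * k)) = 0"
    by (subst integral_cong[where g="\<lambda>_. 0"]) (auto intro!: \<phi>0)
  moreover have "char_conv \<phi> \<psi> k x t = 0"
    unfolding char_conv_def using True by (cases "t = 0") auto
  ultimately show ?thesis by simp
next
  case False
  have int: "(\<lambda>\<sigma>. \<phi> (t - \<sigma>) * \<psi> (x - \<sigma> * k)) integrable_on {0..M}"
    by (intro integrable_continuous_interval continuous_intros continuous_on_compose2[OF c\<phi>]
        continuous_on_compose2[OF c\<psi>]) auto
  have "integral {0..M} (\<lambda>\<sigma>. \<phi> (t - \<sigma>) * \<psi> (x - \<sigma> * k))
      = integral {0..t} (\<lambda>\<sigma>. \<phi> (t - \<sigma>) * \<psi> (x - \<sigma> * k))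
      + integral {t..M} (\<lambda>\<sigma>. \<phi> (t - \<sigma>) * \<psi> (x - \<sigma> * k))"
    using Henstock_Kurzweil_Integration.integral_combine[OF _ _ int, of t] False assms(4) by auto
  also have "integral {t..M} (\<lambda>\<sigma>. \<phi> (t - \<sigma>) * \<psi> (x - \<sigma> * k)) = 0"
    by (subst integral_cong[where g="\<lambda>_. 0"]) (auto simp: \<phi>0)
  also have "integral {0..t} (\<lambda>\<sigma>. \<phi> (t - \<sigma>) * \<psi> (x - \<sigma> * k)) = char_conv \<phi> \<psi> k x t"
    unfolding char_conv_def
    using integral_reflect_Icc_real[where f="\<lambda>s. \<phi> s * \<psi> (x - (t - s) * k)" and t=t] by simp
  finally show ?thesis by simp
qed

lemma has_real_derivative_char_conv_x:
  assumes c\<phi>: "continuous_on UNIV \<phi>" and c\<psi>': "continuous_on UNIV \<psi>'"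
    and d\<psi>: "\<And>y. (\<psi> has_real_derivative \<psi>' y) (at y)"
  shows "((\<lambda>y. char_conv \<phi> \<psi> k y t) has_real_derivative char_conv \<phi> \<psi>' k x t) (at x)"
proof -
  have c\<psi>: "continuous_on UNIV \<psi>"
    using d\<psi> by (meson DERIV_continuous continuous_at_imp_continuous_on)
  have "((\<lambda>y. integral (cbox 0 t) (\<lambda>s. \<phi> s * \<psi> (y - (t - s) * k))) has_field_derivative
      integral (cbox 0 t) (\<lambda>s. \<phi> s * \<psi>' (x - (t - s) * k))) (at x within UNIV)"
  proof (rule leibniz_rule_field_derivative[where fx = "\<lambda>y s. \<phi> s * \<psi>' (y - (t - s) * k)"])
    show "((\<lambda>y. \<phi> s * \<psi> (y - (t - s) * k)) has_field_derivative \<phi> s * \<psi>' (y - (t - s) * k))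
        (at y within UNIV)" for y s
      by (auto intro!: derivative_eq_intros DERIV_chain2[OF d\<psi>])
    show "(\<lambda>s. \<phi> s * \<psi> (y - (t - s) * k)) integrable_on cbox 0 t" for y
      by (intro integrable_continuous continuous_intros continuous_on_compose2[OF c\<phi>]
          continuous_on_compose2[OF c\<psi>]) auto
    show "continuous_on (UNIV \<times> cbox 0 t) (\<lambda>(y, s). \<phi> s * \<psi>' (y - (t - s) * k))"
      unfolding split_beta
      by (intro continuous_intros continuous_on_compose2[OF c\<phi>] continuous_on_compose2[OF c\<psi>']) auto
  qed auto
  then show ?thesis by (simp add: char_conv_def)
qed

lemma has_real_derivative_char_conv_t:
  assumes c\<psi>: "continuous_on UNIV \<psi>" and c\<phi>': "continuous_on UNIV \<phi>'"
    and d\<phi>: "\<And>s. (\<phi> has_real_derivative \<phi>' s) (at s)"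
    and \<phi>0: "\<And>s. s \<le> 0 \<Longrightarrow> \<phi> s = 0" and \<phi>'0: "\<And>s. s \<le> 0 \<Longrightarrow> \<phi>' s = 0"
  shows "((\<lambda>s. char_conv \<phi> \<psi> k x s) has_real_derivative char_conv \<phi>' \<psi> k x t) (at t)"
proof -
  have c\<phi>: "continuous_on UNIV \<phi>"
    using d\<phi> by (meson DERIV_continuous continuous_at_imp_continuous_on)
  define M where "M = \<bar>t\<bar> + 1"
  have M: "0 \<le> M" "t < M" unfolding M_def by auto
  have "((\<lambda>s. integral (cbox 0 M) (\<lambda>\<sigma>. \<phi> (s - \<sigma>) * \<psi> (x - \<sigma> * k))) has_field_derivative
      integral (cbox 0 M) (\<lambda>\<sigma>. \<phi>' (t - \<sigma>) * \<psi> (x - \<sigma> * k))) (at t within UNIV)"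
  proof (rule leibniz_rule_field_derivative[where fx = "\<lambda>s \<sigma>. \<phi>' (s - \<sigma>) * \<psi> (x - \<sigma> * k)"])
    show "((\<lambda>s. \<phi> (s - \<sigma>) * \<psi> (x - \<sigma> * k)) has_field_derivative \<phi>' (s - \<sigma>) * \<psi> (x - \<sigma> * k))
        (at s within UNIV)" for s \<sigma>
      by (auto intro!: derivative_eq_intros DERIV_chain2[OF d\<phi>])
    show "(\<lambda>\<sigma>. \<phi> (s - \<sigma>) * \<psi> (x - \<sigma> * k)) integrable_on cbox 0 M" for s
      by (intro integrable_continuous continuous_intros continuous_on_compose2[OF c\<phi>]
          continuous_on_compose2[OF c\<psi>]) auto
    show "continuous_on (UNIV \<times> cbox 0 M) (\<lambda>(s, \<sigma>). \<phi>' (s - \<sigma>) * \<psi> (x - \<sigma> * k))"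
      unfolding split_beta
      by (intro continuous_intros continuous_on_compose2[OF c\<phi>'] continuous_on_compose2[OF c\<psi>]) auto
  qed auto
  then have "((\<lambda>s. integral {0..M} (\<lambda>\<sigma>. \<phi> (s - \<sigma>) * \<psi> (x - \<sigma> * k))) has_real_derivative
      integral {0..M} (\<lambda>\<sigma>. \<phi>' (t - \<sigma>) * \<psi> (x - \<sigma> * k))) (at t)"
    by simp
  then have "((\<lambda>s. char_conv \<phi> \<psi> k x s) has_real_derivative
      integral {0..M} (\<lambda>\<sigma>. \<phi>' (t - \<sigma>) * \<psi> (x - \<sigma> * k))) (at t)"
    by (rule has_field_derivative_transform_within_open[where S="{..<M}"])
       (use M in \<open>auto intro: char_conv_eq_integral_fixed[OF c\<phi> c\<psi> \<phi>0, symmetric]\<close>)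
  then show ?thesis
    using char_conv_eq_integral_fixed[OF c\<phi>' c\<psi> \<phi>'0, of t M] M by simp
qed

lemma continuous_on_char_conv:
  assumes c\<phi>: "continuous_on UNIV \<phi>" and c\<psi>: "continuous_on UNIV \<psi>"
    and \<phi>0: "\<And>s. s \<le> 0 \<Longrightarrow> \<phi> s = 0"
  shows "continuous_on S (\<lambda>p. char_conv \<phi> \<psi> k (fst p) (snd p))"
proof -
  have "isCont (\<lambda>p. char_conv \<phi> \<psi> k (fst p) (snd p)) (x, t)" for x t
  proof -
    define M where "M = \<bar>t\<bar> + 1"
    have "continuous_on UNIV
        (\<lambda>p. integral (cbox 0 M) (\<lambda>\<sigma>. \<phi> (snd p - \<sigma>) * \<psi> (fst p - \<sigma> * k)))"
      by (rule integral_continuous_on_param, unfold split_beta)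
        (intro continuous_intros continuous_on_compose2[OF c\<phi>] continuous_on_compose2[OF c\<psi>]; auto)
    then have "isCont (\<lambda>p. integral {0..M} (\<lambda>\<sigma>. \<phi> (snd p - \<sigma>) * \<psi> (fst p - \<sigma> * k))) (x, t)"
      by (simp add: continuous_on_eq_continuous_at)
    then show ?thesis
    proof (rule continuous_transform_within[where \<delta>=1])
      fix p :: "real \<times> real"
      assume "dist p (x, t) < 1"
      then have "snd p \<le> M"
        using dist_snd_le[of p "(x, t)"] by (auto simp: M_def dist_real_def)
      then show "integral {0..M} (\<lambda>\<sigma>. \<phi> (snd p - \<sigma>) * \<psi> (fst p - \<sigma> * k))
          = char_conv \<phi> \<psi> k (fst p) (snd p)"
        using char_conv_eq_integral_fixed[OF c\<phi> c\<psi> \<phi>0, of "snd p" M] by (simp add: M_def)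
    qed auto
  qed
  then show ?thesis
    by (auto intro: continuous_at_imp_continuous_on)
qed

lemma char_conv_by_parts:
  assumes d\<phi>: "\<And>s. (\<phi> has_real_derivative \<phi>' s) (at s)" and c\<phi>': "continuous_on UNIV \<phi>'"
    and d\<psi>: "\<And>y. (\<psi> has_real_derivative \<psi>' y) (at y)" and c\<psi>': "continuous_on UNIV \<psi>'"
    and \<phi>0: "\<And>s. s \<le> 0 \<Longrightarrow> \<phi> s = 0"
  shows "k * char_conv \<phi> \<psi>' k x t + char_conv \<phi>' \<psi> k x t = \<phi> t * \<psi> x"
proof (cases "t \<le> 0")
  case True
  then show ?thesis by (cases "t = 0") (auto simp: char_conv_def \<phi>0)
next
  case False
  have c\<phi>: "continuous_on UNIV \<phi>"
    using d\<phi> by (meson DERIV_continuous continuous_at_imp_continuous_on)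
  have c\<psi>: "continuous_on UNIV \<psi>"
    using d\<psi> by (meson DERIV_continuous continuous_at_imp_continuous_on)
  have "((\<lambda>s. \<phi> s * \<psi> (x - (t - s) * k)) has_real_derivative
      \<phi>' s * \<psi> (x - (t - s) * k) + k * (\<phi> s * \<psi>' (x - (t - s) * k))) (at s)" for s
  proof -
    have "((\<lambda>s. \<psi> (x - (t - s) * k)) has_real_derivative \<psi>' (x - (t - s) * k) * k) (at s)"
      by (rule DERIV_chain2[OF d\<psi>]) (auto intro!: derivative_eq_intros)
    from DERIV_mult[OF d\<phi> this] show ?thesis
      by (simp add: algebra_simps)
  qed
  then have "((\<lambda>s. \<phi>' s * \<psi> (x - (t - s) * k) + k * (\<phi> s * \<psi>' (x - (t - s) * k))) has_integral
      \<phi> t * \<psi> (x - (t - t) * k) - \<phi> 0 * \<psi> (x - (t - 0) * k)) {0..t}"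
    using False by (intro has_integral_of_has_real_derivative[where f="\<lambda>s. \<phi> s * \<psi> (x - (t - s) * k)"]) auto
  then have "\<phi> t * \<psi> x
      = integral {0..t} (\<lambda>s. \<phi>' s * \<psi> (x - (t - s) * k) + k * (\<phi> s * \<psi>' (x - (t - s) * k)))"
    by (simp add: \<phi>0 integral_unique)
  also have "\<dots> = char_conv \<phi>' \<psi> k x t + k * char_conv \<phi> \<psi>' k x t"
  proof -
    have "(\<lambda>s. \<phi>' s * \<psi> (x - (t - s) * k)) integrable_on {0..t}"
        "(\<lambda>s. \<phi> s * \<psi>' (x - (t - s) * k)) integrable_on {0..t}"
      by (intro integrable_continuous_interval continuous_intros continuous_on_compose2[OF c\<phi>']
          continuous_on_compose2[OF c\<phi>] continuous_on_compose2[OF c\<psi>]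
          continuous_on_compose2[OF c\<psi>']; force)+
    then show ?thesis
      unfolding char_conv_def by (simp add: integral_add integrable_on_mult_right)
  qed
  finally show ?thesis by simp
qed

lemma has_real_derivative_char_conv_x_by_parts:
  assumes d\<phi>: "\<And>s. (\<phi> has_real_derivative \<phi>' s) (at s)" and c\<phi>': "continuous_on UNIV \<phi>'"
    and d\<psi>: "\<And>y. (\<psi> has_real_derivative \<psi>' y) (at y)" and c\<psi>': "continuous_on UNIV \<psi>'"
    and \<phi>0: "\<And>s. s \<le> 0 \<Longrightarrow> \<phi> s = 0" and "k \<noteq> 0"
  shows "((\<lambda>y. char_conv \<phi> \<psi>' k y t) has_real_derivative
      (\<phi> t * \<psi>' x - char_conv \<phi>' \<psi>' k x t) / k) (at x)"
proof -
  have "char_conv \<phi> \<psi>' k y t = (\<phi> t * \<psi> y - char_conv \<phi>' \<psi> k y t) / k" for y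
    using char_conv_by_parts[OF d\<phi> c\<phi>' d\<psi> c\<psi>' \<phi>0, of k y t] \<open>k \<noteq> 0\<close>
    by (simp add: field_simps)
  moreover have "((\<lambda>y. (\<phi> t * \<psi> y - char_conv \<phi>' \<psi> k y t) / k) has_real_derivative
      (\<phi> t * \<psi>' x - char_conv \<phi>' \<psi>' k x t) / k) (at x)"
    by (intro DERIV_cdivide DERIV_diff DERIV_cmult d\<psi> has_real_derivative_char_conv_x c\<phi>' c\<psi>')
  ultimately show ?thesis by simp
qed

section \<open>Transport in the upper half-plane\<close>

lemma isCont_upper_half_plane:
  fixes f :: "real \<times> real \<Rightarrow> real"
  assumes "continuous_on (UNIV \<times> {0<..}) f" and "t > 0"
  shows "isCont f (x, t)"
  using assms
  by (intro continuous_on_interior[of "UNIV \<times> {0<..}"])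
    (auto simp: interior_Times interior_open[OF open_greaterThan])

lemma mixed_partials_mean_value:
  fixes f fx ft fxt ftx :: "real \<Rightarrow> real \<Rightarrow> real"
  assumes dfx: "\<And>x t. t > 0 \<Longrightarrow> ((\<lambda>y. f y t) has_real_derivative fx x t) (at x)"
    and dft: "\<And>x t. t > 0 \<Longrightarrow> ((\<lambda>s. f x s) has_real_derivative ft x t) (at t)"
    and dfxt: "\<And>x t. t > 0 \<Longrightarrow> ((\<lambda>s. fx x s) has_real_derivative fxt x t) (at t)"
    and dftx: "\<And>x t. t > 0 \<Longrightarrow> ((\<lambda>y. ft y t) has_real_derivative ftx x t) (at x)"
    and "t0 > 0" and "h > 0"
  obtains \<xi> \<eta> \<xi>' \<eta>' where "\<xi> \<in> {x0<..<x0+h}" "\<eta> \<in> {t0<..<t0+h}" "\<xi>' \<in> {x0<..<x0+h}"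
    "\<eta>' \<in> {t0<..<t0+h}" "fxt \<xi> \<eta> = ftx \<xi>' \<eta>'"
proof -
  define \<Delta> where "\<Delta> = f (x0+h) (t0+h) - f (x0+h) t0 - f x0 (t0+h) + f x0 t0"
  obtain \<xi> where \<xi>: "\<xi> \<in> {x0<..<x0+h}" and "\<Delta> = h * (fx \<xi> (t0+h) - fx \<xi> t0)"
  proof -
    have "\<exists>z. x0 < z \<and> z < x0+h \<and> (f (x0+h) (t0+h) - f (x0+h) t0) - (f x0 (t0+h) - f x0 t0)
        = (x0+h - x0) * (fx z (t0+h) - fx z t0)"
      using assms(5,6) by (intro MVT2[where f="\<lambda>y. f y (t0+h) - f y t0"]) (auto intro!: DERIV_diff dfx)
    then show ?thesis using that by (auto simp: \<Delta>_def algebra_simps)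
  qed
  moreover obtain \<eta> where \<eta>: "\<eta> \<in> {t0<..<t0+h}" and "fx \<xi> (t0+h) - fx \<xi> t0 = h * fxt \<xi> \<eta>"
  proof -
    have "\<exists>z. t0 < z \<and> z < t0+h \<and> fx \<xi> (t0+h) - fx \<xi> t0 = (t0+h - t0) * fxt \<xi> z"
      using assms(5,6) by (intro MVT2[where f="fx \<xi>"]) (auto intro!: dfxt)
    then show ?thesis using that by auto
  qed
  moreover obtain \<eta>' where \<eta>': "\<eta>' \<in> {t0<..<t0+h}" and "\<Delta> = h * (ft (x0+h) \<eta>' - ft x0 \<eta>')"
  proof -
    have "\<exists>z. t0 < z \<and> z < t0+h \<and> (f (x0+h) (t0+h) - f x0 (t0+h)) - (f (x0+h) t0 - f x0 t0)
        = (t0+h - t0) * (ft (x0+h) z - ft x0 z)"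
      using assms(5,6) by (intro MVT2[where f="\<lambda>s. f (x0+h) s - f x0 s"]) (auto intro!: DERIV_diff dft)
    then show ?thesis using that by (auto simp: \<Delta>_def algebra_simps)
  qed
  moreover obtain \<xi>' where \<xi>': "\<xi>' \<in> {x0<..<x0+h}" and "ft (x0+h) \<eta>' - ft x0 \<eta>' = h * ftx \<xi>' \<eta>'"
  proof -
    have "\<exists>z. x0 < z \<and> z < x0+h \<and> ft (x0+h) \<eta>' - ft x0 \<eta>' = (x0+h - x0) * ftx z \<eta>'"
      using assms(5,6) \<eta>' by (intro MVT2[where f="\<lambda>y. ft y \<eta>'"]) (auto intro!: dftx)
    then show ?thesis using that by auto
  qed
  ultimately have "fxt \<xi> \<eta> = ftx \<xi>' \<eta>'"
    using \<open>h > 0\<close> by simp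
  with \<xi> \<eta> \<xi>' \<eta>' show ?thesis by (rule that)
qed

lemma mixed_partials_eq:
  fixes f fx ft fxt ftx :: "real \<Rightarrow> real \<Rightarrow> real"
  assumes dfx: "\<And>x t. t > 0 \<Longrightarrow> ((\<lambda>y. f y t) has_real_derivative fx x t) (at x)"
    and dft: "\<And>x t. t > 0 \<Longrightarrow> ((\<lambda>s. f x s) has_real_derivative ft x t) (at t)"
    and dfxt: "\<And>x t. t > 0 \<Longrightarrow> ((\<lambda>s. fx x s) has_real_derivative fxt x t) (at t)"
    and dftx: "\<And>x t. t > 0 \<Longrightarrow> ((\<lambda>y. ft y t) has_real_derivative ftx x t) (at x)"
    and cfxt: "continuous_on (UNIV \<times> {0<..}) (\<lambda>(x,t). fxt x t)"
    and cftx: "continuous_on (UNIV \<times> {0<..}) (\<lambda>(x,t). ftx x t)"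
    and "t0 > 0"
  shows "fxt x0 t0 = ftx x0 t0"
proof -
  have "isCont (\<lambda>(x,t). fxt x t) (x0,t0)" "isCont (\<lambda>(x,t). ftx x t) (x0,t0)"
    using isCont_upper_half_plane[OF cfxt \<open>t0 > 0\<close>] isCont_upper_half_plane[OF cftx \<open>t0 > 0\<close>] .
  then have "\<bar>fxt x0 t0 - ftx x0 t0\<bar> < 2 * e" if "e > 0" for e
  proof -
    obtain d1 where "d1 > 0" and d1: "\<And>p. dist p (x0,t0) < d1 \<Longrightarrow>
        dist ((\<lambda>(x,t). fxt x t) p) (fxt x0 t0) < e"
      using \<open>isCont (\<lambda>(x,t). fxt x t) (x0,t0)\<close>[unfolded continuous_at_eps_delta, rule_format, OF \<open>e > 0\<close>]
      by auto
    obtain d2 where "d2 > 0" and d2: "\<And>p. dist p (x0,t0) < d2 \<Longrightarrow>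
        dist ((\<lambda>(x,t). ftx x t) p) (ftx x0 t0) < e"
      using \<open>isCont (\<lambda>(x,t). ftx x t) (x0,t0)\<close>[unfolded continuous_at_eps_delta, rule_format, OF \<open>e > 0\<close>]
      by auto
    define d where "d = min d1 d2"
    have "d > 0" using \<open>d1 > 0\<close> \<open>d2 > 0\<close> by (simp add: d_def)
    have near: "dist (x, t) (x0, t0) < d" if "x \<in> {x0<..<x0 + d/2}" "t \<in> {t0<..<t0 + d/2}" for x t
    proof -
      have "dist (x, t) (x0, t0) \<le> dist x x0 + dist t t0"
        using sqrt_sum_squares_le_sum_abs[of "dist x x0" "dist t t0"] by (simp add: dist_Pair_Pair)
      also have "\<dots> < d" using that by (auto simp: dist_real_def)
      finally show ?thesis .
    qed
    obtain \<xi> \<eta> \<xi>' \<eta>' where \<xi>\<eta>: "\<xi> \<in> {x0<..<x0 + d/2}" "\<eta> \<in> {t0<..<t0 + d/2}"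
      and \<xi>'\<eta>': "\<xi>' \<in> {x0<..<x0 + d/2}" "\<eta>' \<in> {t0<..<t0 + d/2}" and "fxt \<xi> \<eta> = ftx \<xi>' \<eta>'"
      by (rule mixed_partials_mean_value[OF dfx dft dfxt dftx \<open>t0 > 0\<close>, where h="d/2"])
        (use \<open>d > 0\<close> in auto)
    moreover have "\<bar>fxt \<xi> \<eta> - fxt x0 t0\<bar> < e"
      using d1[of "(\<xi>, \<eta>)"] near[OF \<xi>\<eta>] by (simp add: d_def dist_real_def)
    moreover have "\<bar>ftx \<xi>' \<eta>' - ftx x0 t0\<bar> < e"
      using d2[of "(\<xi>', \<eta>')"] near[OF \<xi>'\<eta>'] by (simp add: d_def dist_real_def)
    ultimately show ?thesis by linarith
  qed
  from this[of "\<bar>fxt x0 t0 - ftx x0 t0\<bar> / 2"] show ?thesis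
    by (cases "fxt x0 t0 = ftx x0 t0") auto
qed

lemma has_real_derivative_along_line:
  fixes u ux ut :: "real \<Rightarrow> real \<Rightarrow> real"
  assumes dux: "\<And>x t. t > 0 \<Longrightarrow> ((\<lambda>y. u y t) has_real_derivative ux x t) (at x)"
    and dut: "\<And>x t. t > 0 \<Longrightarrow> ((\<lambda>s. u x s) has_real_derivative ut x t) (at t)"
    and cux: "continuous_on (UNIV \<times> {0<..}) (\<lambda>(x,t). ux x t)"
    and "t > 0"
  shows "((\<lambda>\<tau>. u (y + k*\<tau>) \<tau>) has_real_derivative ut (y + k*t) t + k * ux (y + k*t) t) (at t)"
proof -
  define x where "x = y + k*t"
  have "isCont (\<lambda>p. (\<lambda>(x,t). ux x t) (prod.swap p)) (t, x)"
    using isCont_upper_half_plane[OF cux \<open>t > 0\<close>, of x]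
    by (intro isCont_o2[OF isCont_swap]) simp
  then have "isCont (\<lambda>p. blinfun_mult_right ((\<lambda>(x,t). ux x t) (prod.swap p))) (t, x)"
    by (rule bounded_linear.isCont[OF bounded_linear_blinfun_mult_right])
  then have cont: "isCont (\<lambda>(s, y). blinfun_mult_right (ux y s)) (t, x)"
    by (simp add: split_beta')
  have "((\<lambda>(s, y). u y s) has_derivative
      (\<lambda>(ds, dy). ut x t * ds + blinfun_apply (blinfun_mult_right (ux x t)) dy))
      (at (t, x) within {0<..} \<times> UNIV)"
  proof (rule has_derivative_partialsI[where f="\<lambda>s y. u y s"])
    show "((\<lambda>s. u x s) has_derivative (*) (ut x t)) (at t within {0<..})"
      using dut[OF \<open>t > 0\<close>] unfolding has_field_derivative_def by (rule has_derivative_subset) simp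
    show "((\<lambda>y. u y s) has_derivative blinfun_apply (blinfun_mult_right (ux y s))) (at y within UNIV)"
      if "s \<in> {0<..}" for s y
      using dux[of s y] that by (simp add: has_field_derivative_def)
    show "continuous (at (t, x) within {0<..} \<times> UNIV) (\<lambda>(s, y). blinfun_mult_right (ux y s))"
      using cont by (rule continuous_at_imp_continuous_at_within)
  qed (use \<open>t > 0\<close> in auto)
  then have D: "((\<lambda>(s, y). u y s) has_derivative (\<lambda>(ds, dy). ut x t * ds + ux x t * dy)) (at (t, x))"
    using at_within_open[of "(t, x)" "{0<..} \<times> UNIV"] \<open>t > 0\<close> by (simp add: open_Times)
  have L: "((\<lambda>\<tau>. (\<tau>, y + k*\<tau>)) has_derivative (\<lambda>h. (h, k*h))) (at t)"
    by (intro has_derivative_Pair has_derivative_ident)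
      (auto intro!: derivative_eq_intros)
  have "((\<lambda>(s, y). u y s) \<circ> (\<lambda>\<tau>. (\<tau>, y + k*\<tau>)) has_derivative
      (\<lambda>(ds, dy). ut x t * ds + ux x t * dy) \<circ> (\<lambda>h. (h, k*h))) (at t)"
    by (rule diff_chain_at[OF L]) (simp add: x_def[symmetric] D)
  then have "((\<lambda>\<tau>. u (y + k*\<tau>) \<tau>) has_derivative (\<lambda>h. ut x t * h + ux x t * (k*h))) (at t)"
    by (simp add: o_def)
  then show ?thesis
    unfolding has_field_derivative_def x_def[symmetric]
    by (rule has_derivative_eq_rhs) (auto simp: fun_eq_iff algebra_simps)
qed

lemma transport_constant_along_characteristics:
  fixes u ux ut :: "real \<Rightarrow> real \<Rightarrow> real"
  assumes dux: "\<And>x t. t > 0 \<Longrightarrow> ((\<lambda>y. u y t) has_real_derivative ux x t) (at x)"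
    and dut: "\<And>x t. t > 0 \<Longrightarrow> ((\<lambda>s. u x s) has_real_derivative ut x t) (at t)"
    and cux: "continuous_on (UNIV \<times> {0<..}) (\<lambda>(x,t). ux x t)"
    and transport: "\<And>x t. t > 0 \<Longrightarrow> ut x t + k * ux x t = 0"
    and "s > 0" and "t > 0"
  shows "u (y + k * s) s = u (y + k*t) t"
proof (rule DERIV_isconst3[where a=0 and b="max s t + 1" and x=s and y=t and f="\<lambda>\<tau>. u (y + k*\<tau>) \<tau>"])
  fix \<tau> :: real
  assume "\<tau> \<in> {0<..<max s t + 1}"
  then show "((\<lambda>\<tau>. u (y + k*\<tau>) \<tau>) has_real_derivative 0) (at \<tau>)"
    using has_real_derivative_along_line[OF dux dut cux, of \<tau> y k] transport by simp
qed (use assms in auto)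

text \<open>Integrating \<open>u\<^sub>t + k u\<^sub>x = p(x + m t)\<close> along the characteristic \<open>x = y + k t\<close> from the
  initial line, where \<open>u\<close> vanishes.\<close>
lemma transport_solution_zero_initial:
  fixes u ux ut :: "real \<Rightarrow> real \<Rightarrow> real"
  assumes dux: "\<And>x t. t > 0 \<Longrightarrow> ((\<lambda>y. u y t) has_real_derivative ux x t) (at x)"
    and dut: "\<And>x t. t > 0 \<Longrightarrow> ((\<lambda>s. u x s) has_real_derivative ut x t) (at t)"
    and cux: "continuous_on (UNIV \<times> {0<..}) (\<lambda>(x,t). ux x t)"
    and cu: "continuous_on (UNIV \<times> {0..}) (\<lambda>(x,t). u x t)"
    and u0: "\<And>x. u x 0 = 0"
    and dP: "\<And>z. (P has_real_derivative p z) (at z)"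
    and transport: "\<And>x t. t > 0 \<Longrightarrow> ut x t + k * ux x t = p (x + m*t)"
    and "k + m \<noteq> 0" and "t \<ge> 0"
  shows "u x t = (P (x + m*t) - P (x - k*t)) / (k + m)"
proof -
  define y where "y = x - k*t"
  define g where "g = (\<lambda>\<tau>. u (y + k*\<tau>) \<tau> - (P (y + (k + m)*\<tau>) - P y) / (k + m))"
  have cP: "continuous_on UNIV P"
    using dP by (meson DERIV_continuous continuous_at_imp_continuous_on)
  have "g t = g 0"
  proof (cases "t = 0")
    case False
    show ?thesis
    proof (rule DERIV_isconst_end[where f=g])
      show "continuous_on {0..t} g"
        unfolding g_def
        by (intro continuous_intros continuous_on_compose2[OF cu, where f="\<lambda>\<tau>. (y + k*\<tau>, \<tau>)", simplified]
            continuous_on_compose2[OF cP]) (use \<open>k + m \<noteq> 0\<close> in auto)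
      fix \<tau> :: real
      assume "0 < \<tau>" "\<tau> < t"
      have du: "((\<lambda>\<tau>. u (y + k*\<tau>) \<tau>) has_real_derivative p (y + (k + m)*\<tau>)) (at \<tau>)"
        using has_real_derivative_along_line[OF dux dut cux \<open>0 < \<tau>\<close>, of y k] transport[OF \<open>0 < \<tau>\<close>]
        by (simp add: algebra_simps)
      have "((\<lambda>\<tau>. P (y + (k + m)*\<tau>)) has_real_derivative p (y + (k + m)*\<tau>) * (k + m)) (at \<tau>)"
        by (rule DERIV_chain2[OF dP]) (auto intro!: derivative_eq_intros)
      from DERIV_cdivide[OF DERIV_diff[OF this DERIV_const[of "P y"]], of "k + m"]
      have "((\<lambda>\<tau>. (P (y + (k + m)*\<tau>) - P y) / (k + m)) has_real_derivative p (y + (k + m)*\<tau>)) (at \<tau>)"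
        using \<open>k + m \<noteq> 0\<close> by simp
      from DERIV_diff[OF du this] show "(g has_real_derivative 0) (at \<tau>)"
        by (simp add: g_def)
    qed (use False \<open>t \<ge> 0\<close> in auto)
  qed simp
  moreover have "y + k*t = x" "y + (k + m)*t = x + m*t"
    by (simp_all add: y_def algebra_simps)
  ultimately show ?thesis
    by (simp add: g_def u0 y_def[symmetric])
qed

section \<open>Uniqueness\<close>

definition classical_solution ::
    "real \<Rightarrow> (real \<Rightarrow> real \<Rightarrow> real) \<Rightarrow> (real \<Rightarrow> real \<Rightarrow> real) \<Rightarrow> (real \<Rightarrow> real \<Rightarrow> real) \<Rightarrow>
     (real \<Rightarrow> real \<Rightarrow> real) \<Rightarrow> (real \<Rightarrow> real \<Rightarrow> real) \<Rightarrow> (real \<Rightarrow> real \<Rightarrow> real) \<Rightarrow>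
     (real \<Rightarrow> real \<Rightarrow> real) \<Rightarrow> (real \<Rightarrow> real \<Rightarrow> real) \<Rightarrow> bool" where
  "classical_solution C g f fx ft fxx fxt ftx ftt \<longleftrightarrow>
      (\<forall>x t. t > 0 \<longrightarrow>
          ((\<lambda>y. f y t) has_real_derivative fx x t) (at x)
        \<and> ((\<lambda>s. f x s) has_real_derivative ft x t) (at t)
        \<and> ((\<lambda>y. fx y t) has_real_derivative fxx x t) (at x)
        \<and> ((\<lambda>s. fx x s) has_real_derivative fxt x t) (at t)
        \<and> ((\<lambda>y. ft y t) has_real_derivative ftx x t) (at x)
        \<and> ((\<lambda>s. ft x s) has_real_derivative ftt x t) (at t))
    \<and> continuous_on (UNIV \<times> {0<..}) (\<lambda>(x,t). fx x t)
    \<and> continuous_on (UNIV \<times> {0<..}) (\<lambda>(x,t). fxx x t)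
    \<and> continuous_on (UNIV \<times> {0<..}) (\<lambda>(x,t). fxt x t)
    \<and> continuous_on (UNIV \<times> {0<..}) (\<lambda>(x,t). ftx x t)
    \<and> continuous_on (UNIV \<times> {0<..}) (\<lambda>(x,t). ftt x t)
    \<and> (\<forall>x. ((\<lambda>s. f x s) has_real_derivative ft x 0) (at_right 0))
    \<and> continuous_on (UNIV \<times> {0..}) (\<lambda>(x,t). f x t)
    \<and> continuous_on (UNIV \<times> {0..}) (\<lambda>(x,t). ft x t)
    \<and> (\<forall>x t. t > 0 \<longrightarrow>
          ftt x t + C * fxt x t + C * ftx x t + C^2 * fxx x t - fxx x t = g x t)
    \<and> (\<forall>x. f x 0 = 0)
    \<and> (\<forall>x. ft x 0 = 0)"

lemma is_solution_iff_classical_solution: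
  "is_solution C g f \<longleftrightarrow> (\<exists>fx ft fxx fxt ftx ftt. classical_solution C g f fx ft fxx fxt ftx ftt)"
  unfolding is_solution_def classical_solution_def ..

lemma classical_solution_diff:
  assumes "classical_solution C g f1 fx1 ft1 fxx1 fxt1 ftx1 ftt1"
    and "classical_solution C g f2 fx2 ft2 fxx2 fxt2 ftx2 ftt2"
  shows "classical_solution C (\<lambda>_ _. 0) (\<lambda>x t. f1 x t - f2 x t)
    (\<lambda>x t. fx1 x t - fx2 x t) (\<lambda>x t. ft1 x t - ft2 x t) (\<lambda>x t. fxx1 x t - fxx2 x t)
    (\<lambda>x t. fxt1 x t - fxt2 x t) (\<lambda>x t. ftx1 x t - ftx2 x t) (\<lambda>x t. ftt1 x t - ftt2 x t)"
  using assms unfolding classical_solution_def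
  by (auto simp: split_beta algebra_simps
      intro!: DERIV_diff DERIV_diff[where D=0 and E=0, simplified] continuous_on_diff)

lemma classical_solution_cong:
  assumes "classical_solution C g G fx ft fxx fxt ftx ftt"
    and eq: "\<And>x t. t \<ge> 0 \<Longrightarrow> F x t = G x t"
  shows "classical_solution C g F fx ft fxx fxt ftx ftt"
proof -
  have "((\<lambda>s. F x s) has_real_derivative D) (at t) \<longleftrightarrow> ((\<lambda>s. G x s) has_real_derivative D) (at t)"
    if "t > 0" for x t D
  proof (rule DERIV_cong_ev)
    have "\<forall>\<^sub>F s in nhds t. s \<in> {0<..}"
      using \<open>t > 0\<close> by (intro eventually_nhds_in_open) auto
    then show "\<forall>\<^sub>F s in nhds t. F x s = G x s"
      by eventually_elim (simp add: eq)
  qed auto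
  moreover have "((\<lambda>s. F x s) has_real_derivative D) (at_right 0) \<longleftrightarrow>
      ((\<lambda>s. G x s) has_real_derivative D) (at_right 0)" for x D
    by (rule has_field_derivative_cong_eventually) (auto simp: eventually_at_filter eq)
  moreover have "(\<lambda>y. F y t) = (\<lambda>y. G y t)" if "t > 0" for t
    using that by (simp add: eq)
  moreover have "continuous_on (UNIV \<times> {0..}) (\<lambda>(x,t). F x t) \<longleftrightarrow>
      continuous_on (UNIV \<times> {0..}) (\<lambda>(x,t). G x t)"
    by (rule continuous_on_cong) (auto simp: eq)
  ultimately show ?thesis
    using assms(1) by (auto simp: classical_solution_def eq)
qed

lemma is_solution_cong:
  assumes "is_solution C g G" and "\<And>x t. t \<ge> 0 \<Longrightarrow> F x t = G x t"
  shows "is_solution C g F"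
proof -
  obtain fx ft fxx fxt ftx ftt where "classical_solution C g G fx ft fxx fxt ftx ftt"
    using assms(1) unfolding is_solution_iff_classical_solution by blast
  then have "classical_solution C g F fx ft fxx fxt ftx ftt"
    using assms(2) by (rule classical_solution_cong)
  then show ?thesis
    unfolding is_solution_iff_classical_solution by blast
qed

text \<open>Once the mixed partials agree, the homogeneous equation reads
  \<open>(\<partial>\<^sub>t + (C-1)\<partial>\<^sub>x)(w\<^sub>t + (C+1) w\<^sub>x) = 0\<close>.\<close>
lemma classical_solution_homogeneous_characteristic:
  assumes "classical_solution C (\<lambda>_ _. 0) w wx wt wxx wxt wtx wtt"
  obtains c where "continuous_on UNIV c"
    and "\<And>x t. t > 0 \<Longrightarrow> wt x t + (C + 1) * wx x t = c (x - (C - 1) * t)"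
proof -
  have dwx: "\<And>x t. t > 0 \<Longrightarrow> ((\<lambda>y. w y t) has_real_derivative wx x t) (at x)"
    and dwt: "\<And>x t. t > 0 \<Longrightarrow> ((\<lambda>s. w x s) has_real_derivative wt x t) (at t)"
    and dwxx: "\<And>x t. t > 0 \<Longrightarrow> ((\<lambda>y. wx y t) has_real_derivative wxx x t) (at x)"
    and dwxt: "\<And>x t. t > 0 \<Longrightarrow> ((\<lambda>s. wx x s) has_real_derivative wxt x t) (at t)"
    and dwtx: "\<And>x t. t > 0 \<Longrightarrow> ((\<lambda>y. wt y t) has_real_derivative wtx x t) (at x)"
    and dwtt: "\<And>x t. t > 0 \<Longrightarrow> ((\<lambda>s. wt x s) has_real_derivative wtt x t) (at t)"
    and cwxx: "continuous_on (UNIV \<times> {0<..}) (\<lambda>(x,t). wxx x t)"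
    and cwxt: "continuous_on (UNIV \<times> {0<..}) (\<lambda>(x,t). wxt x t)"
    and cwtx: "continuous_on (UNIV \<times> {0<..}) (\<lambda>(x,t). wtx x t)"
    and pde: "\<And>x t. t > 0 \<Longrightarrow> wtt x t + C * wxt x t + C * wtx x t + C^2 * wxx x t - wxx x t = 0"
    using assms unfolding classical_solution_def by auto
  define z where "z = (\<lambda>x t. wt x t + (C + 1) * wx x t)"
  define zx where "zx = (\<lambda>x t. wtx x t + (C + 1) * wxx x t)"
  define zt where "zt = (\<lambda>x t. wtt x t + (C + 1) * wxt x t)"
  have dzx: "((\<lambda>y. z y t) has_real_derivative zx x t) (at x)" if "t > 0" for x t
    unfolding z_def zx_def using that by (intro DERIV_add DERIV_cmult dwtx dwxx)
  have dzt: "((\<lambda>s. z x s) has_real_derivative zt x t) (at t)" if "t > 0" for x t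
    unfolding z_def zt_def using that by (intro DERIV_add DERIV_cmult dwt dwtt dwxt)
  have czx: "continuous_on (UNIV \<times> {0<..}) (\<lambda>(x,t). zx x t)"
    using cwtx cwxx unfolding zx_def by (simp add: split_beta continuous_on_add continuous_on_mult_left)
  have "zt x t + (C - 1) * zx x t = 0" if "t > 0" for x t
  proof -
    have "wxt x t = wtx x t"
      by (rule mixed_partials_eq[OF dwx dwt dwxt dwtx cwxt cwtx that])
    with pde[of t x] that show ?thesis
      by (simp add: zt_def zx_def algebra_simps power2_eq_square)
  qed
  then have z_char: "z (y + (C - 1) * s) s = z (y + (C - 1) * t) t" if "s > 0" "t > 0" for y s t
    using transport_constant_along_characteristics[OF dzx dzt czx] that by blast
  define c where "c = (\<lambda>y. z (y + (C - 1)) 1)"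
  have "(c has_real_derivative zx (y + (C - 1)) 1 * 1) (at y)" for y
    unfolding c_def by (rule DERIV_chain2[where f="\<lambda>y. z y 1", OF dzx]) (auto intro!: derivative_eq_intros)
  then have "continuous_on UNIV c"
    by (meson DERIV_continuous continuous_at_imp_continuous_on)
  moreover have "wt x t + (C + 1) * wx x t = c (x - (C - 1) * t)" if "t > 0" for x t
    using z_char[of 1 t "x - (C - 1) * t"] that by (simp add: z_def c_def)
  ultimately show ?thesis
    by (rule that)
qed

lemma classical_solution_homogeneous_eq_0:
  assumes "classical_solution C (\<lambda>_ _. 0) w wx wt wxx wxt wtx wtt" and "t \<ge> 0"
  shows "w x t = 0"
proof -
  have dwx: "\<And>x t. t > 0 \<Longrightarrow> ((\<lambda>y. w y t) has_real_derivative wx x t) (at x)"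
    and dwt: "\<And>x t. t > 0 \<Longrightarrow> ((\<lambda>s. w x s) has_real_derivative wt x t) (at t)"
    and cwx: "continuous_on (UNIV \<times> {0<..}) (\<lambda>(x,t). wx x t)"
    and dw0: "\<And>x. ((\<lambda>s. w x s) has_real_derivative 0) (at_right 0)"
    and cw: "continuous_on (UNIV \<times> {0..}) (\<lambda>(x,t). w x t)"
    and w0: "\<And>x. w x 0 = 0"
    using assms(1) unfolding classical_solution_def by auto
  obtain c where "continuous_on UNIV c"
    and wc: "\<And>x t. t > 0 \<Longrightarrow> wt x t + (C + 1) * wx x t = c (x + (1 - C) * t)"
    using classical_solution_homogeneous_characteristic[OF assms(1)] by (auto simp: algebra_simps)
  then obtain P where dP: "\<And>y. (P has_real_derivative c y) (at y)"
    using continuous_on_UNIV_has_antiderivative by blast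
  have rep: "w x t = (P (x - (C - 1) * t) - P (x - (C + 1) * t)) / 2" if "t \<ge> 0" for x t
  proof -
    have "w x t = (P (x + (1 - C) * t) - P (x - (C + 1) * t)) / ((C + 1) + (1 - C))"
      by (rule transport_solution_zero_initial[OF dwx dwt cwx cw w0 dP wc _ that]) simp_all
    then show ?thesis
      by (simp add: algebra_simps)
  qed
  have c0: "c y = 0" for y
  proof -
    have "((\<lambda>s. P (y - k * s)) has_real_derivative c (y - k * 0) * (- k)) (at 0)" for k
      by (rule DERIV_chain2[OF dP]) (auto intro!: derivative_eq_intros)
    then have dPk: "((\<lambda>s. P (y - k * s)) has_real_derivative c y * (- k)) (at_right 0)" for k
      by (simp add: has_field_derivative_at_within)
    from DERIV_cdivide[OF DERIV_diff[OF dPk[of "C - 1"] dPk[of "C + 1"]], of 2]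
    have D: "((\<lambda>s. (P (y - (C - 1) * s) - P (y - (C + 1) * s)) / 2) has_real_derivative c y) (at_right 0)"
      by (simp add: algebra_simps)
    have D0: "((\<lambda>s. (P (y - (C - 1) * s) - P (y - (C + 1) * s)) / 2) has_real_derivative 0)
        (at_right 0)"
      using dw0[of y] by (subst has_field_derivative_cong_eventually[symmetric])
        (auto simp: eventually_at_filter rep)
    show ?thesis
      using has_field_derivative_unique[OF D D0] by simp
  qed
  have "P (x - (C - 1) * t) = P (x - (C + 1) * t)"
    using DERIV_isconst_all[of P] dP c0 by auto
  then show ?thesis
    using rep[OF assms(2), of x] by simp
qed

lemma is_solution_unique:
  assumes "is_solution C g f1" and "is_solution C g f2" and "t \<ge> 0"
  shows "f1 x t = f2 x t"
proof -
  obtain fx1 ft1 fxx1 fxt1 ftx1 ftt1 where "classical_solution C g f1 fx1 ft1 fxx1 fxt1 ftx1 ftt1"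
    using assms(1) unfolding is_solution_iff_classical_solution by blast
  moreover obtain fx2 ft2 fxx2 fxt2 ftx2 ftt2 where "classical_solution C g f2 fx2 ft2 fxx2 fxt2 ftx2 ftt2"
    using assms(2) unfolding is_solution_iff_classical_solution by blast
  ultimately have "classical_solution C (\<lambda>_ _. 0) (\<lambda>x t. f1 x t - f2 x t)
    (\<lambda>x t. fx1 x t - fx2 x t) (\<lambda>x t. ft1 x t - ft2 x t) (\<lambda>x t. fxx1 x t - fxx2 x t)
    (\<lambda>x t. fxt1 x t - fxt2 x t) (\<lambda>x t. ftx1 x t - ftx2 x t) (\<lambda>x t. ftt1 x t - ftt2 x t)"
    by (rule classical_solution_diff)
  from classical_solution_homogeneous_eq_0[OF this assms(3)] show ?thesis by simp
qed

section \<open>Existence and the two representations\<close>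

lemma S2_product:
  fixes a a1 a2 b b1 b2 :: "real \<Rightarrow> real"
  assumes da: "\<And>t. (a has_real_derivative a1 t) (at t)"
    and da1: "\<And>t. (a1 has_real_derivative a2 t) (at t)"
    and db: "\<And>x. (b has_real_derivative b1 x) (at x)"
    and db1: "\<And>x. (b1 has_real_derivative b2 x) (at x)"
  shows "S2 C (\<lambda>x t. a t * b x) x t = a2 t * b x + 2*C*(a1 t * b1 x) + C^2*(a t * b2 x)"
proof -
  have "(\<lambda>s. deriv (\<lambda>s'. a s' * b x) s) = (\<lambda>s. a1 s * b x)"
    "(\<lambda>s. deriv (\<lambda>y. a s * b y) x) = (\<lambda>s. a s * b1 x)"
    "(\<lambda>y. deriv (\<lambda>s. a s * b y) t) = (\<lambda>y. a1 t * b y)"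
    "(\<lambda>y. deriv (\<lambda>y'. a t * b y') y) = (\<lambda>y. a t * b1 y)"
    by (auto intro!: DERIV_imp_deriv DERIV_cmult DERIV_cmult_right da db)
  moreover have "deriv (\<lambda>s. a1 s * b x) t = a2 t * b x"
    "deriv (\<lambda>s. a s * b1 x) t = a1 t * b1 x"
    "deriv (\<lambda>y. a1 t * b y) x = a1 t * b1 x"
    "deriv (\<lambda>y. a t * b1 y) x = a t * b2 x"
    by (auto intro!: DERIV_imp_deriv DERIV_cmult DERIV_cmult_right da da1 db db1)
  ultimately show ?thesis
    unfolding S2_def by (simp add: algebra_simps)
qed

lemma char_conv_wave_identity:
  fixes a1 a2 b b1 b2 :: "real \<Rightarrow> real" and x t A C :: real
  assumes da1: "\<And>t. (a1 has_real_derivative a2 t) (at t)" and ca2: "continuous_on UNIV a2"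
    and db1: "\<And>x. (b1 has_real_derivative b2 x) (at x)" and cb2: "continuous_on UNIV b2"
    and a10: "\<And>t. t \<le> 0 \<Longrightarrow> a1 t = 0" and "\<bar>C\<bar> \<noteq> 1"
  defines "V \<equiv> \<lambda>k. char_conv a1 b2 k x t"
  shows "(a2 t * b x + 1/2 * (char_conv a2 b1 (C - 1) x t - char_conv a2 b1 (C + 1) x t))
      + 2 * C * (a1 t * b1 x + 1/2 * (V (C - 1) - V (C + 1)))
      + (C^2 - 1) * (A + 1/2 * ((A - V (C - 1)) / (C - 1) - (A - V (C + 1)) / (C + 1)))
    = a2 t * b x + 2*C*(a1 t * b1 x) + C^2 * A"
proof -
  have "k2 * k1 * (A + 1/2 * ((A - p) / k2 - (A - q) / k1))
      = k2 * k1 * A + 1/2 * (k1 * (A - p) - k2 * (A - q))" if "k1 \<noteq> 0" "k2 \<noteq> 0" for k1 k2 p q :: real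
    using that by (simp add: field_simps)
  moreover have "C^2 - 1 = (C - 1) * (C + 1)"
    by (simp add: algebra_simps power2_eq_square)
  ultimately have fxx_term: "(C^2 - 1) * (A + 1/2 * ((A - V (C - 1)) / (C - 1) - (A - V (C + 1)) / (C + 1)))
      = (C^2 - 1) * A + 1/2 * ((C + 1) * (A - V (C - 1)) - (C - 1) * (A - V (C + 1)))"
    using \<open>\<bar>C\<bar> \<noteq> 1\<close> by auto
  have by_parts: "char_conv a2 b1 k x t = a1 t * b1 x - k * V k" for k
    using char_conv_by_parts[OF da1 ca2 db1 cb2 a10, of k x t] by (simp add: V_def)
  show ?thesis
    unfolding fxx_term by_parts by (simp add: algebra_simps power2_eq_square)
qed

lemma is_solution_char_conv:
  fixes a a1 a2 b b1 b2 :: "real \<Rightarrow> real"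
  assumes da: "\<And>t. (a has_real_derivative a1 t) (at t)"
    and da1: "\<And>t. (a1 has_real_derivative a2 t) (at t)"
    and ca2: "continuous_on UNIV a2"
    and db: "\<And>x. (b has_real_derivative b1 x) (at x)"
    and db1: "\<And>x. (b1 has_real_derivative b2 x) (at x)"
    and cb2: "continuous_on UNIV b2"
    and a0: "\<And>t. t \<le> 0 \<Longrightarrow> a t = 0"
    and a10: "\<And>t. t \<le> 0 \<Longrightarrow> a1 t = 0"
    and a20: "\<And>t. t \<le> 0 \<Longrightarrow> a2 t = 0"
    and "\<bar>C\<bar> \<noteq> 1"
  shows "is_solution C (\<lambda>x t. a2 t * b x + 2*C*(a1 t * b1 x) + C^2*(a t * b2 x))
     (\<lambda>x t. a t * b x + 1/2 * (char_conv a b1 (C-1) x t - char_conv a b1 (C+1) x t))"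
proof -
  have ca: "continuous_on UNIV a" and ca1: "continuous_on UNIV a1"
    and cb: "continuous_on UNIV b" and cb1: "continuous_on UNIV b1"
    using da da1 db db1 by (meson DERIV_continuous continuous_at_imp_continuous_on)+
  have "C - 1 \<noteq> 0" "C + 1 \<noteq> 0"
    using \<open>\<bar>C\<bar> \<noteq> 1\<close> by auto
  define f where "f = (\<lambda>x t. a t * b x + 1/2 * (char_conv a b1 (C-1) x t - char_conv a b1 (C+1) x t))"
  define fx where "fx = (\<lambda>x t. a t * b1 x + 1/2 * (char_conv a b2 (C-1) x t - char_conv a b2 (C+1) x t))"
  define ft where "ft = (\<lambda>x t. a1 t * b x + 1/2 * (char_conv a1 b1 (C-1) x t - char_conv a1 b1 (C+1) x t))"
  define fxx where "fxx = (\<lambda>x t. a t * b2 x + 1/2 * ((a t * b2 x - char_conv a1 b2 (C-1) x t) / (C-1)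
      - (a t * b2 x - char_conv a1 b2 (C+1) x t) / (C+1)))"
  define fxt where "fxt = (\<lambda>x t. a1 t * b1 x + 1/2 * (char_conv a1 b2 (C-1) x t - char_conv a1 b2 (C+1) x t))"
  define ftt where "ftt = (\<lambda>x t. a2 t * b x + 1/2 * (char_conv a2 b1 (C-1) x t - char_conv a2 b1 (C+1) x t))"
  have dft: "((\<lambda>s. f x s) has_real_derivative ft x t) (at t)" for x t
    unfolding f_def ft_def
    by (intro DERIV_add DERIV_cmult DERIV_cmult_right DERIV_diff da
        has_real_derivative_char_conv_t[OF cb1 ca1 da a0 a10])
  have "classical_solution C (\<lambda>x t. a2 t * b x + 2*C*(a1 t * b1 x) + C^2*(a t * b2 x))
      f fx ft fxx fxt fxt ftt"
    unfolding classical_solution_def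
  proof (intro conjI allI impI)
    fix x t :: real
    show "((\<lambda>y. f y t) has_real_derivative fx x t) (at x)"
      unfolding f_def fx_def
      by (intro DERIV_add DERIV_cmult DERIV_diff db has_real_derivative_char_conv_x[OF ca cb2 db1])
    show "((\<lambda>s. f x s) has_real_derivative ft x t) (at t)"
      by (rule dft)
    txt \<open>\<open>b2\<close> is only continuous, so the space derivative of \<open>char_conv a b2\<close> is taken after
      integrating by parts.\<close>
    show "((\<lambda>y. fx y t) has_real_derivative fxx x t) (at x)"
      unfolding fx_def fxx_def
      by (intro DERIV_add DERIV_cmult DERIV_diff db1 \<open>C - 1 \<noteq> 0\<close> \<open>C + 1 \<noteq> 0\<close>
          has_real_derivative_char_conv_x_by_parts[OF da ca1 db1 cb2 a0])
    show "((\<lambda>s. fx x s) has_real_derivative fxt x t) (at t)"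
      unfolding fx_def fxt_def
      by (intro DERIV_add DERIV_cmult DERIV_cmult_right DERIV_diff da
          has_real_derivative_char_conv_t[OF cb2 ca1 da a0 a10])
    show "((\<lambda>y. ft y t) has_real_derivative fxt x t) (at x)"
      unfolding ft_def fxt_def
      by (intro DERIV_add DERIV_cmult DERIV_diff db has_real_derivative_char_conv_x[OF ca1 cb2 db1])
    show "((\<lambda>s. ft x s) has_real_derivative ftt x t) (at t)"
      unfolding ft_def ftt_def
      by (intro DERIV_add DERIV_cmult DERIV_cmult_right DERIV_diff da1
          has_real_derivative_char_conv_t[OF cb1 ca2 da1 a10 a20])
    show "((\<lambda>s. f x s) has_real_derivative ft x 0) (at_right 0)"
      using dft by (rule has_field_derivative_at_within)
    show "f x 0 = 0" "ft x 0 = 0"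
      by (simp_all add: f_def ft_def char_conv_def a0 a10)
    have "ftt x t + C * fxt x t + C * fxt x t + C^2 * fxx x t - fxx x t
        = ftt x t + 2 * C * fxt x t + (C^2 - 1) * fxx x t"
      by (simp add: algebra_simps)
    also have "\<dots> = a2 t * b x + 2*C*(a1 t * b1 x) + C^2*(a t * b2 x)"
      unfolding ftt_def fxt_def fxx_def
      by (rule char_conv_wave_identity[OF da1 ca2 db1 cb2 a10 \<open>\<bar>C\<bar> \<noteq> 1\<close>])
    finally show "ftt x t + C * fxt x t + C * fxt x t + C^2 * fxx x t - fxx x t
        = a2 t * b x + 2*C*(a1 t * b1 x) + C^2*(a t * b2 x)" .
  next
    note cc = continuous_on_char_conv[OF ca cb1 a0] continuous_on_char_conv[OF ca cb2 a0]
      continuous_on_char_conv[OF ca1 cb1 a10] continuous_on_char_conv[OF ca1 cb2 a10]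
      continuous_on_char_conv[OF ca2 cb1 a20]
    have cab: "continuous_on S (\<lambda>p. a (snd p))" "continuous_on S (\<lambda>p. a1 (snd p))"
      "continuous_on S (\<lambda>p. a2 (snd p))" "continuous_on S (\<lambda>p. b (fst p))"
      "continuous_on S (\<lambda>p. b1 (fst p))" "continuous_on S (\<lambda>p. b2 (fst p))"
      for S :: "(real \<times> real) set"
      by (intro continuous_intros continuous_on_compose2[OF ca] continuous_on_compose2[OF ca1]
          continuous_on_compose2[OF ca2] continuous_on_compose2[OF cb] continuous_on_compose2[OF cb1]
          continuous_on_compose2[OF cb2]; auto)+
    show "continuous_on (UNIV \<times> {0<..}) (\<lambda>(x,t). fx x t)"
      "continuous_on (UNIV \<times> {0<..}) (\<lambda>(x,t). fxx x t)"
      "continuous_on (UNIV \<times> {0<..}) (\<lambda>(x,t). fxt x t)"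
      "continuous_on (UNIV \<times> {0<..}) (\<lambda>(x,t). fxt x t)"
      "continuous_on (UNIV \<times> {0<..}) (\<lambda>(x,t). ftt x t)"
      "continuous_on (UNIV \<times> {0..}) (\<lambda>(x,t). f x t)"
      "continuous_on (UNIV \<times> {0..}) (\<lambda>(x,t). ft x t)"
      unfolding f_def fx_def ft_def fxx_def fxt_def ftt_def split_beta
      using \<open>C - 1 \<noteq> 0\<close> \<open>C + 1 \<noteq> 0\<close> by (intro continuous_intros cc cab; simp)+
  qed
  then show ?thesis
    unfolding is_solution_iff_classical_solution f_def by blast
qed

text \<open>With \<open>\<alpha> s = x - (t - s)(C + 1)\<close>, \<open>\<beta> s = x - (t - s)(C - 1)\<close> and an antiderivative \<open>B\<close>
  of \<open>b\<close>, the inner integral is explicit, and everything but the \<open>(C\<^sup>2 - 1) a b'\<close> part is the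
  \<open>s\<close>-derivative of \<open>Q s = a' s (B \<beta> - B \<alpha>) + a s ((C + 1) b \<beta> - (C - 1) b \<alpha>)\<close>.\<close>
lemma duhamel_product_source:
  fixes a a1 a2 b b1 b2 :: "real \<Rightarrow> real"
  assumes da: "\<And>t. (a has_real_derivative a1 t) (at t)"
    and da1: "\<And>t. (a1 has_real_derivative a2 t) (at t)"
    and db: "\<And>x. (b has_real_derivative b1 x) (at x)"
    and db1: "\<And>x. (b1 has_real_derivative b2 x) (at x)"
    and "a 0 = 0" and "a1 0 = 0" and "t \<ge> 0"
  shows "1/2 * integral {0..t} (\<lambda>s. integral {x - (t - s) * (C + 1) .. x - (t - s) * (C - 1)}
            (\<lambda>r. a2 s * b r + 2*C*(a1 s * b1 r) + C^2*(a s * b2 r)))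
       = a t * b x + 1/2 * integral {0..t} (\<lambda>s. a s * (b1 (x - (t - s) * (C - 1)) - b1 (x - (t - s) * (C + 1))))"
proof -
  have ca: "continuous_on UNIV a" and cb: "continuous_on UNIV b" and cb1: "continuous_on UNIV b1"
    using da db db1 by (meson DERIV_continuous continuous_at_imp_continuous_on)+
  obtain B where dB: "\<And>x. (B has_real_derivative b x) (at x)"
    using continuous_on_UNIV_has_antiderivative[OF cb] by blast
  define \<alpha> where "\<alpha> = (\<lambda>s. x - (t - s) * (C + 1))"
  define \<beta> where "\<beta> = (\<lambda>s. x - (t - s) * (C - 1))"
  define E where "E = (\<lambda>s. a s * (b1 (\<beta> s) - b1 (\<alpha> s)))"
  define Q where "Q = (\<lambda>s. a1 s * (B (\<beta> s) - B (\<alpha> s)) + a s * ((C + 1) * b (\<beta> s) - (C - 1) * b (\<alpha> s)))"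
  define D where "D = (\<lambda>s. a2 s * (B (\<beta> s) - B (\<alpha> s)) + 2*C*(a1 s * (b (\<beta> s) - b (\<alpha> s)))
      + (C^2 - 1) * E s)"
  have inner: "integral {\<alpha> s..\<beta> s} (\<lambda>r. a2 s * b r + 2*C*(a1 s * b1 r) + C^2*(a s * b2 r)) = D s + E s"
    if "s \<le> t" for s
  proof -
    have "\<alpha> s \<le> \<beta> s"
      using that by (simp add: \<alpha>_def \<beta>_def algebra_simps)
    then have "((\<lambda>r. a2 s * b r + 2*C*(a1 s * b1 r) + C^2*(a s * b2 r)) has_integral
        a2 s * (B (\<beta> s) - B (\<alpha> s)) + 2*C*(a1 s * (b (\<beta> s) - b (\<alpha> s))) + C^2*E s) {\<alpha> s..\<beta> s}"
      unfolding E_def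
      by (intro has_integral_add has_integral_mult_right has_integral_of_has_real_derivative dB db db1)
    then show ?thesis
      by (simp add: integral_unique D_def algebra_simps)
  qed
  have "(Q has_real_derivative D s) (at s)" for s
  proof -
    have "((\<lambda>s. g (\<beta> s)) has_real_derivative g' (\<beta> s) * (C - 1)) (at s)"
      "((\<lambda>s. g (\<alpha> s)) has_real_derivative g' (\<alpha> s) * (C + 1)) (at s)"
      if "\<And>y. (g has_real_derivative g' y) (at y)" for g g'
      unfolding \<alpha>_def \<beta>_def
      by (auto intro!: DERIV_chain2[OF that] derivative_eq_intros)
    from this[OF dB] this[OF db] show ?thesis
      unfolding Q_def
      by (auto intro!: derivative_eq_intros da da1 simp: D_def E_def algebra_simps power2_eq_square)
  qed
  then have "(D has_integral Q t - Q 0) {0..t}"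
    using \<open>t \<ge> 0\<close> by (rule has_integral_of_has_real_derivative[rotated])
  moreover have "Q t - Q 0 = 2 * (a t * b x)"
    using \<open>a 0 = 0\<close> \<open>a1 0 = 0\<close> by (simp add: Q_def \<alpha>_def \<beta>_def algebra_simps)
  moreover have "E integrable_on {0..t}"
    unfolding E_def \<alpha>_def \<beta>_def
    by (intro integrable_continuous_interval continuous_intros continuous_on_compose2[OF ca]
        continuous_on_compose2[OF cb1]) auto
  ultimately have "((\<lambda>s. D s + E s) has_integral 2 * (a t * b x) + integral {0..t} E) {0..t}"
    by (metis has_integral_add integrable_integral)
  then have "integral {0..t} (\<lambda>s. D s + E s) = 2 * (a t * b x) + integral {0..t} E"
    by (rule integral_unique)
  moreover have "integral {0..t} (\<lambda>s. integral {\<alpha> s..\<beta> s}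
      (\<lambda>r. a2 s * b r + 2*C*(a1 s * b1 r) + C^2*(a s * b2 r))) = integral {0..t} (\<lambda>s. D s + E s)"
    by (rule integral_cong) (simp add: inner)
  ultimately show ?thesis
    by (simp add: \<alpha>_def \<beta>_def E_def)
qed

theorem mainTheorem1:
  fixes C t0 L :: real and a b :: "real \<Rightarrow> real"
  assumes hC: "\<bar>C\<bar> \<noteq> 1"
    and ha_diff: "\<forall>t. a differentiable (at t)"
    and ha_diff2: "\<forall>t. deriv a differentiable (at t)"
    and ha_cont2: "continuous_on UNIV (deriv (deriv a))"
    and ha_nonneg: "\<forall>t. a t \<ge> 0"
    and ht0: "t0 > 0"
    and ha_zero: "\<forall>t. t \<le> 0 \<longrightarrow> a t = 0"
    and ha_one: "\<forall>t. t > t0 \<longrightarrow> a t = 1"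
    and hb_diff: "\<forall>x. b differentiable (at x)"
    and hb_diff2: "\<forall>x. deriv b differentiable (at x)"
    and hb_cont2: "continuous_on UNIV (deriv (deriv b))"
    and hL: "L > 0"
    and hb_supp: "\<forall>x. x \<notin> {-L<..<L} \<longrightarrow> b x = 0"
  defines "h \<equiv> (\<lambda>x t. a t * b x)"
  defines "F \<equiv> (\<lambda>x t. 1/2 * integral {0..t}
              (\<lambda>s. integral {x - (t - s) * (C + 1) .. x - (t - s) * (C - 1)} (\<lambda>r. S2 C h r s)))"
  defines "G \<equiv> (\<lambda>x t. a t * b x + 1/2 * integral {0..t}
              (\<lambda>s. a s * (deriv b (x - (t - s) * (C - 1)) - deriv b (x - (t - s) * (C + 1)))))"
  shows "is_solution C (S2 C h) F
       \<and> (\<forall>f. is_solution C (S2 C h) f \<longrightarrow> (\<forall>x t. t \<ge> 0 \<longrightarrow> f x t = F x t))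
       \<and> (\<forall>x t. t \<ge> 0 \<longrightarrow> F x t = G x t)"
proof -
  have da: "\<And>t. (a has_real_derivative deriv a t) (at t)"
    and da1: "\<And>t. (deriv a has_real_derivative deriv (deriv a) t) (at t)"
    and db: "\<And>x. (b has_real_derivative deriv b x) (at x)"
    and db1: "\<And>x. (deriv b has_real_derivative deriv (deriv b) x) (at x)"
    using ha_diff ha_diff2 hb_diff hb_diff2 by (simp_all add: DERIV_deriv_iff_real_differentiable)
  have a0: "\<And>t. t \<le> 0 \<Longrightarrow> a t = 0"
    using ha_zero by blast
  then have a10: "\<And>t. t \<le> 0 \<Longrightarrow> deriv a t = 0"
    using DERIV_eq_0_if_vanishing_nonpos[OF da] by blast
  then have a20: "\<And>t. t \<le> 0 \<Longrightarrow> deriv (deriv a) t = 0"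
    using DERIV_eq_0_if_vanishing_nonpos[OF da1] by blast
  have source: "S2 C h = (\<lambda>x t. deriv (deriv a) t * b x + 2*C*(deriv a t * deriv b x)
      + C^2*(a t * deriv (deriv b) x))"
    unfolding h_def by (intro ext S2_product da da1 db db1)
  have ca: "continuous_on UNIV a" and cb1: "continuous_on UNIV (deriv b)"
    using da db1 by (meson DERIV_continuous continuous_at_imp_continuous_on)+
  have G_conv: "G = (\<lambda>x t. a t * b x + 1/2 * (char_conv a (deriv b) (C-1) x t - char_conv a (deriv b) (C+1) x t))"
    unfolding G_def by (simp only: char_conv_diff[OF ca cb1])
  have "is_solution C (S2 C h) G"
    unfolding source G_conv by (rule is_solution_char_conv[OF da da1 ha_cont2 db db1 hb_cont2 a0 a10 a20 hC])
  moreover have FG: "F x t = G x t" if "t \<ge> 0" for x t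
    unfolding F_def G_def source using duhamel_product_source[OF da da1 db db1 _ _ that] a0 a10 by simp
  ultimately have "is_solution C (S2 C h) F"
    by (rule is_solution_cong)
  then show ?thesis
    using FG is_solution_unique by blast
qed

end
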